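(* Let $r\ge1$ be an integer and $g\in C^\infty[a,b]$ with $g(a)=0$, $g^{(j)}(a)=0$ for $j=1,\dots,r$, and $g^{(r+1)}(x)\ne0$ for all $x\in[a,b]$. For integers $k\ge0$ define $\widehat\varphi_k(x)=g'(x)g(x)^{\frac{k-r}{r+1}}$ if $g^{(r+1)}>0$ on $[a,b]$, and $\widehat\varphi_k(x)=g'(x)(-g(x))^{\frac{k-r}{r+1}}$ if $g^{(r+1)}<0$ on $[a,b]$ (with values at $x=a$ by continuous extension). For $n\ge1$, the space $\widehat{\mathcal{E}}=\{v=\sum_{k=0}^{n-1}c_k\widehat\varphi_k:c_k\in\mathbb{R}\}$ is an extended Chebyshev space on $[a,b]$.
   Context: An extended Chebyshev space on $[a,b]$ is an $n$-dimensional linear space of sufficiently smooth functions on $[a,b]$ in which every nonzero element has at most $n-1$ zeros in $[a,b]$ counted with multiplicity (equivalently, every Hermite interpolation problem with $n$ conditions at points of $[a,b]$ has a unique solution in the space). Real powers of positive numbers are the positive real ones. *)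

theory Defs
  imports Complex_Main
begin

definition hderivs :: "real \<Rightarrow> real \<Rightarrow> (real \<Rightarrow> real) \<Rightarrow> (nat \<Rightarrow> real \<Rightarrow> real) \<Rightarrow> bool" where
  "hderivs a b f D \<longleftrightarrow> (\<forall>x\<in>{a..b}. D 0 x = f x) \<and>
     (\<forall>j. \<forall>x\<in>{a..b}. (D j has_real_derivative D (Suc j) x) (at x within {a..b}))"

definition smooth_on_interval :: "real \<Rightarrow> real \<Rightarrow> (real \<Rightarrow> real) \<Rightarrow> bool" where
  "smooth_on_interval a b f \<longleftrightarrow> (\<exists>D. hderivs a b f D)"

definition zero_of_mult :: "real \<Rightarrow> real \<Rightarrow> (real \<Rightarrow> real) \<Rightarrow> real \<Rightarrow> nat \<Rightarrow> bool" where
  "zero_of_mult a b f z m \<longleftrightarrow> z \<in> {a..b} \<and> (\<exists>D. hderivs a b f D \<and> (\<forall>j<m. D j z = 0))"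

definition ext_chebyshev_span :: "real \<Rightarrow> real \<Rightarrow> nat \<Rightarrow> (nat \<Rightarrow> real \<Rightarrow> real) \<Rightarrow> bool" where
  "ext_chebyshev_span a b n phi \<longleftrightarrow>
     (\<forall>k<n. smooth_on_interval a b (phi k)) \<and>
     (\<forall>c. (\<forall>x\<in>{a..b}. (\<Sum>k<n. c k * phi k x) = 0) \<longrightarrow> (\<forall>k<n. c k = 0)) \<and>
     (\<forall>c Z m. (\<exists>x\<in>{a..b}. (\<Sum>k<n. c k * phi k x) \<noteq> 0) \<and> finite Z \<and> Z \<subseteq> {a..b} \<and>
        (\<forall>z\<in>Z. zero_of_mult a b (\<lambda>x. \<Sum>k<n. c k * phi k x) z (m z))
        \<longrightarrow> sum m Z \<le> n - 1)"

definition phi_hat :: "real \<Rightarrow> real \<Rightarrow> (real \<Rightarrow> real) \<Rightarrow> (nat \<Rightarrow> real \<Rightarrow> real) \<Rightarrow> nat \<Rightarrow> nat \<Rightarrow> real \<Rightarrow> real" where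
  "phi_hat a b g D r k =
     (let e = (real k - real r) / (real r + 1);
          s = (if \<forall>x\<in>{a..b}. D (Suc r) x > 0 then (1::real) else -1);
          f = (\<lambda>x. D 1 x * (s * g x) powr e)
      in (\<lambda>x. if x = a then Lim (at_right a) f else f x))"

end

(* After multiplying g by the sign s of g^(r+1), G = s g vanishes to order r + 1 at a and
   G^(r+1) > 0, so Hadamard's lemma writes G = (x - a)^(r+1) H with H smooth and positive on [a,b].
   Then u = (x - a) H^(1/(r+1)) is smooth with u^(r+1) = G and u' > 0, and the generators become
   phi_k = s (r + 1) u' u^k.  Every element of the span is therefore a nonvanishing smooth factor
   times p(u) for a polynomial p of degree < n.  As u is a strictly increasing smooth change of
   variable, a zero of p(u) of multiplicity m at z is a root of p of order at least m at u(z), and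
   the orders of the roots of p add up to at most deg p < n. *)

theory Submission
  imports Defs "HOL-Analysis.Analysis" "HOL-Computational_Algebra.Polynomial"
begin

lemma hderivs_cong:
  assumes "hderivs a b f D" "\<And>x. x \<in> {a..b} \<Longrightarrow> f x = g x"
  shows "hderivs a b g D"
  using assms unfolding hderivs_def by auto

lemma hderivs_Suc: "hderivs a b f D \<Longrightarrow> hderivs a b (D 1) (\<lambda>j. D (Suc j))"
  unfolding hderivs_def by auto

lemma hderivs_has_real_derivative:
  assumes "hderivs a b f D" "x \<in> {a..b}"
  shows "(f has_real_derivative D 1 x) (at x within {a..b})"
proof (rule has_field_derivative_transform_within[OF _ zero_less_one assms(2)])
  show "(D 0 has_real_derivative D 1 x) (at x within {a..b})"
    using assms by (simp add: hderivs_def)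
qed (use assms in \<open>simp add: hderivs_def\<close>)

lemma continuous_on_hderivs: "hderivs a b f D \<Longrightarrow> continuous_on {a..b} (D j)"
  unfolding hderivs_def continuous_on_eq_continuous_within using DERIV_continuous by blast

lemma continuous_on_hderivs_fun: "hderivs a b f D \<Longrightarrow> continuous_on {a..b} f"
proof -
  assume D: "hderivs a b f D"
  have "continuous_on {a..b} (D 0)" by (rule continuous_on_hderivs[OF D])
  moreover have "\<And>x. x \<in> {a..b} \<Longrightarrow> D 0 x = f x" using D by (simp add: hderivs_def)
  ultimately show ?thesis using continuous_on_cong[OF refl, of "{a..b}" "D 0" f] by blast
qed

lemma has_real_derivative_Icc_unique:
  fixes a b :: real
  assumes "a < b" "x \<in> {a..b}"
    and "(f has_real_derivative d) (at x within {a..b})" "(f has_real_derivative e) (at x within {a..b})"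
  shows "d = e"
  using assms by (intro has_field_derivative_unique) (auto simp: trivial_limit_within)

lemma hderivs_one_eq:
  fixes a b :: real
  assumes "a < b" "hderivs a b f D" "x \<in> {a..b}" "(f has_real_derivative d) (at x within {a..b})"
  shows "D 1 x = d"
  using has_real_derivative_Icc_unique[OF assms(1,3) hderivs_has_real_derivative[OF assms(2,3)] assms(4)] .

lemma hderivs_unique:
  fixes a b :: real
  assumes "a < b" "hderivs a b f D" "hderivs a b f E" "x \<in> {a..b}"
  shows "D j x = E j x"
  using assms(4)
proof (induction j arbitrary: x)
  case 0
  then show ?case using assms(2,3) by (simp add: hderivs_def)
next
  case (Suc j)
  have "hderivs a b (D j) (\<lambda>i. D (i + j))" "hderivs a b (D j) (\<lambda>i. E (i + j))"
    using assms(2,3) Suc.IH unfolding hderivs_def by auto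
  from hderivs_one_eq[OF assms(1) this(2) Suc.prems hderivs_has_real_derivative[OF this(1) Suc.prems]]
  show ?case by simp
qed

lemma hderivs_add:
  "hderivs a b f Df \<Longrightarrow> hderivs a b g Dg \<Longrightarrow> hderivs a b (\<lambda>x. f x + g x) (\<lambda>j x. Df j x + Dg j x)"
  unfolding hderivs_def by (auto intro: DERIV_add)

lemma hderivs_const: "hderivs a b (\<lambda>x. c) (\<lambda>j x. if j = 0 then c else 0)"
  unfolding hderivs_def by auto

lemma hderivs_diff_const: "hderivs a b (\<lambda>x. x - c) (\<lambda>j x. if j = 0 then x - c else if j = 1 then 1 else 0)"
  unfolding hderivs_def by (auto intro!: derivative_eq_intros)

lemma hderivs_cmult: "hderivs a b f D \<Longrightarrow> hderivs a b (\<lambda>x. c * f x) (\<lambda>j x. c * D j x)"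
  unfolding hderivs_def by (auto intro: DERIV_cmult)

lemma smooth_on_intervalI: "hderivs a b f D \<Longrightarrow> smooth_on_interval a b f"
  unfolding smooth_on_interval_def by blast

lemma smooth_on_interval_cong:
  "smooth_on_interval a b f \<Longrightarrow> (\<And>x. x \<in> {a..b} \<Longrightarrow> f x = g x) \<Longrightarrow> smooth_on_interval a b g"
  unfolding smooth_on_interval_def by (blast intro: hderivs_cong)

(* Smoothness of products and powers without Leibniz' formula: if the derivatives of the functions
   in B lie in the algebra generated by B, that algebra is closed under differentiation. *)
definition deriv_closed :: "real \<Rightarrow> real \<Rightarrow> (real \<Rightarrow> real) set \<Rightarrow> (real \<Rightarrow> real) set \<Rightarrow> bool" where
  "deriv_closed a b B S \<longleftrightarrow>
     (\<forall>f\<in>B. \<exists>f'\<in>S. \<forall>x\<in>{a..b}. (f has_real_derivative f' x) (at x within {a..b}))"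

lemma smooth_on_interval_if_deriv_closed:
  assumes "deriv_closed a b S S" "f \<in> S"
  shows "smooth_on_interval a b f"
proof -
  obtain d where d: "\<forall>f\<in>S. d f \<in> S \<and> (\<forall>x\<in>{a..b}. (f has_real_derivative d f x) (at x within {a..b}))"
    using assms(1) unfolding deriv_closed_def by metis
  have "(d ^^ j) f \<in> S" for j
    by (induction j) (use assms(2) d in auto)
  then have "hderivs a b f (\<lambda>j. (d ^^ j) f)"
    unfolding hderivs_def using d by simp
  then show ?thesis unfolding smooth_on_interval_def by blast
qed

inductive_set fun_algebra :: "(real \<Rightarrow> real) set \<Rightarrow> (real \<Rightarrow> real) set" for B where
  base: "f \<in> B \<Longrightarrow> f \<in> fun_algebra B"
| const: "(\<lambda>x. c) \<in> fun_algebra B"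
| add: "f \<in> fun_algebra B \<Longrightarrow> g \<in> fun_algebra B \<Longrightarrow> (\<lambda>x. f x + g x) \<in> fun_algebra B"
| mult: "f \<in> fun_algebra B \<Longrightarrow> g \<in> fun_algebra B \<Longrightarrow> (\<lambda>x. f x * g x) \<in> fun_algebra B"

lemma deriv_closed_fun_algebra:
  assumes "deriv_closed a b B (fun_algebra B)"
  shows "deriv_closed a b (fun_algebra B) (fun_algebra B)"
  unfolding deriv_closed_def
proof
  fix p assume "p \<in> fun_algebra B"
  then show "\<exists>p'\<in>fun_algebra B. \<forall>x\<in>{a..b}. (p has_real_derivative p' x) (at x within {a..b})"
  proof (induction rule: fun_algebra.induct)
    case (base f)
    then show ?case using assms unfolding deriv_closed_def by blast
  next
    case (const c)
    show ?case by (rule bexI[of _ "\<lambda>x. 0"]) (auto intro: fun_algebra.const)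
  next
    case (add f g)
    then obtain f' g' where "f' \<in> fun_algebra B" "g' \<in> fun_algebra B"
      and "\<forall>x\<in>{a..b}. (f has_real_derivative f' x) (at x within {a..b})"
          "\<forall>x\<in>{a..b}. (g has_real_derivative g' x) (at x within {a..b})" by blast
    then show ?case
      by (intro bexI[of _ "\<lambda>x. f' x + g' x"]) (auto intro: DERIV_add fun_algebra.add)
  next
    case (mult f g)
    then obtain f' g' where "f' \<in> fun_algebra B" "g' \<in> fun_algebra B"
      and "\<forall>x\<in>{a..b}. (f has_real_derivative f' x) (at x within {a..b})"
          "\<forall>x\<in>{a..b}. (g has_real_derivative g' x) (at x within {a..b})" by blast
    with mult.hyps show ?case
      by (intro bexI[of _ "\<lambda>x. f' x * g x + g' x * f x"])
        (auto intro: DERIV_mult fun_algebra.add fun_algebra.mult)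
  qed
qed

lemma deriv_closed_hderivs:
  assumes "hderivs a b f D" "range D \<subseteq> B"
  shows "deriv_closed a b (range D) (fun_algebra B)"
  unfolding deriv_closed_def
proof
  fix h assume "h \<in> range D"
  then obtain j where "h = D j" by blast
  then show "\<exists>h'\<in>fun_algebra B. \<forall>x\<in>{a..b}. (h has_real_derivative h' x) (at x within {a..b})"
    using assms by (intro bexI[of _ "D (Suc j)"]) (auto simp: hderivs_def intro: fun_algebra.base)
qed

lemma smooth_on_interval_fun_algebra:
  assumes "deriv_closed a b B (fun_algebra B)" "p \<in> fun_algebra B" "\<And>x. x \<in> {a..b} \<Longrightarrow> f x = p x"
  shows "smooth_on_interval a b f"
  using smooth_on_interval_if_deriv_closed[OF deriv_closed_fun_algebra[OF assms(1)] assms(2)]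
  by (rule smooth_on_interval_cong) (simp add: assms(3))

lemma smooth_on_interval_mult:
  assumes "smooth_on_interval a b f" "smooth_on_interval a b g"
  shows "smooth_on_interval a b (\<lambda>x. f x * g x)"
proof -
  obtain Df Dg where D: "hderivs a b f Df" "hderivs a b g Dg"
    using assms unfolding smooth_on_interval_def by blast
  let ?B = "range Df \<union> range Dg"
  show ?thesis
  proof (rule smooth_on_interval_fun_algebra)
    show "deriv_closed a b ?B (fun_algebra ?B)"
      using deriv_closed_hderivs[OF D(1), of ?B] deriv_closed_hderivs[OF D(2), of ?B]
      unfolding deriv_closed_def by blast
    show "(\<lambda>x. Df 0 x * Dg 0 x) \<in> fun_algebra ?B" by (intro fun_algebra.mult fun_algebra.base) auto
  qed (use D in \<open>simp add: hderivs_def\<close>)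
qed

lemma smooth_on_interval_add:
  "smooth_on_interval a b f \<Longrightarrow> smooth_on_interval a b g \<Longrightarrow> smooth_on_interval a b (\<lambda>x. f x + g x)"
  unfolding smooth_on_interval_def using hderivs_add by blast

lemma smooth_on_interval_const: "smooth_on_interval a b (\<lambda>x. c)"
  unfolding smooth_on_interval_def using hderivs_const by blast

lemma smooth_on_interval_diff_const: "smooth_on_interval a b (\<lambda>x. x - c)"
  unfolding smooth_on_interval_def using hderivs_diff_const by blast

lemma smooth_on_interval_powr:
  assumes "smooth_on_interval a b f" "\<forall>x\<in>{a..b}. 0 < f x"
  shows "smooth_on_interval a b (\<lambda>x. f x powr \<beta>)"
proof -
  obtain D where D: "hderivs a b f D" using assms(1) unfolding smooth_on_interval_def by blast
  let ?P = "range (\<lambda>k::nat. \<lambda>x. D 0 x powr (\<beta> - real k))"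
  let ?B = "range D \<union> ?P"
  have "deriv_closed a b ?P (fun_algebra ?B)"
    unfolding deriv_closed_def
  proof
    fix h assume "h \<in> ?P"
    then obtain k where k: "h = (\<lambda>x. D 0 x powr (\<beta> - real k))" by blast
    let ?h' = "\<lambda>x. (\<lambda>x. (\<beta> - real k) * D 1 x) x * (\<lambda>x. D 0 x powr (\<beta> - real (Suc k))) x"
    have "\<forall>x\<in>{a..b}. (h has_real_derivative ?h' x) (at x within {a..b})"
    proof
      fix x assume x: "x \<in> {a..b}"
      have "(D 0 has_real_derivative D 1 x) (at x within {a..b})" "0 < D 0 x"
        using D assms(2) x by (auto simp: hderivs_def)
      then show "(h has_real_derivative ?h' x) (at x within {a..b})"
        unfolding k by (auto intro!: derivative_eq_intros simp: algebra_simps)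
    qed
    moreover have "?h' \<in> fun_algebra ?B"
      by (intro fun_algebra.mult fun_algebra.const fun_algebra.base UnI2 UnI1 rangeI)
    ultimately show "\<exists>h'\<in>fun_algebra ?B. \<forall>x\<in>{a..b}. (h has_real_derivative h' x) (at x within {a..b})"
      by (intro bexI[of _ ?h'])
  qed
  then have "deriv_closed a b ?B (fun_algebra ?B)"
    using deriv_closed_hderivs[OF D, of ?B] unfolding deriv_closed_def by blast
  moreover have "(\<lambda>x. D 0 x powr (\<beta> - real 0)) \<in> fun_algebra ?B"
    by (intro fun_algebra.base UnI2 rangeI)
  moreover have "f x powr \<beta> = D 0 x powr (\<beta> - real 0)" if "x \<in> {a..b}" for x
    using D that by (simp add: hderivs_def)
  ultimately show ?thesis by (rule smooth_on_interval_fun_algebra)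
qed

lemma smooth_on_interval_inverse:
  assumes "smooth_on_interval a b f" "\<forall>x\<in>{a..b}. 0 < f x"
  shows "smooth_on_interval a b (\<lambda>x. inverse (f x))"
  using smooth_on_interval_powr[OF assms, of "- 1"]
  by (rule smooth_on_interval_cong) (use assms(2) in \<open>simp add: powr_neg_one inverse_eq_divide less_imp_le\<close>)

lemma smooth_on_interval_poly_comp:
  assumes "smooth_on_interval a b u"
  shows "smooth_on_interval a b (\<lambda>x. poly p (u x))"
proof (induction p)
  case 0
  then show ?case using smooth_on_interval_const[of a b 0] by simp
next
  case (pCons c p)
  then show ?case
    using smooth_on_interval_add[OF smooth_on_interval_const smooth_on_interval_mult[OF assms]] by simp
qed

lemma smooth_on_interval_power:
  assumes "smooth_on_interval a b u"
  shows "smooth_on_interval a b (\<lambda>x. u x ^ k)"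
  by (induction k) (auto intro: smooth_on_interval_mult[OF assms] simp: smooth_on_interval_const)

section \<open>Multiplicities of zeros\<close>

lemma zero_of_mult_iff:
  fixes a b :: real
  assumes "a < b" "hderivs a b f D"
  shows "zero_of_mult a b f z m \<longleftrightarrow> z \<in> {a..b} \<and> (\<forall>j<m. D j z = 0)"
proof
  assume "zero_of_mult a b f z m"
  then obtain E where z: "z \<in> {a..b}" and E: "hderivs a b f E" "\<forall>j<m. E j z = 0"
    unfolding zero_of_mult_def by blast
  then show "z \<in> {a..b} \<and> (\<forall>j<m. D j z = 0)"
    using hderivs_unique[OF assms(1,2) E(1) z] by simp
qed (use assms(2) in \<open>auto simp: zero_of_mult_def\<close>)

lemma zero_of_mult_0: "zero_of_mult a b f z 0 \<longleftrightarrow> z \<in> {a..b} \<and> smooth_on_interval a b f"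
  unfolding zero_of_mult_def smooth_on_interval_def by simp

lemma zero_of_mult_cong:
  "zero_of_mult a b f z m \<Longrightarrow> (\<And>x. x \<in> {a..b} \<Longrightarrow> f x = g x) \<Longrightarrow> zero_of_mult a b g z m"
  unfolding zero_of_mult_def by (blast intro: hderivs_cong)

lemma zero_of_mult_mono: "zero_of_mult a b f z m \<Longrightarrow> k \<le> m \<Longrightarrow> zero_of_mult a b f z k"
  unfolding zero_of_mult_def by auto

lemma zero_of_mult_add:
  assumes "zero_of_mult a b f z m" "zero_of_mult a b g z m"
  shows "zero_of_mult a b (\<lambda>x. f x + g x) z m"
proof -
  obtain Df Dg where "z \<in> {a..b}" "hderivs a b f Df" "\<forall>j<m. Df j z = 0" "hderivs a b g Dg" "\<forall>j<m. Dg j z = 0"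
    using assms unfolding zero_of_mult_def by blast
  moreover from this have "hderivs a b (\<lambda>x. f x + g x) (\<lambda>j x. Df j x + Dg j x)"
    by (blast intro: hderivs_add)
  ultimately show ?thesis
    unfolding zero_of_mult_def by (intro conjI exI[of _ "\<lambda>j x. Df j x + Dg j x"]) auto
qed

lemma zero_of_mult_Suc_iff:
  fixes a b :: real
  assumes "a < b" "hderivs a b f D"
  shows "zero_of_mult a b f z (Suc m) \<longleftrightarrow> f z = 0 \<and> zero_of_mult a b (D 1) z m"
proof -
  have "f z = D 0 z" if "z \<in> {a..b}" using assms(2) that by (simp add: hderivs_def)
  then show ?thesis
    unfolding zero_of_mult_iff[OF assms] zero_of_mult_iff[OF assms(1) hderivs_Suc[OF assms(2)]]
    by (auto simp: less_Suc_eq_0_disj)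
qed

lemma zero_of_mult_mult:
  fixes a b :: real
  assumes "a < b"
  shows "zero_of_mult a b f z m \<Longrightarrow> smooth_on_interval a b h \<Longrightarrow> zero_of_mult a b (\<lambda>x. f x * h x) z m"
proof (induction m arbitrary: f h)
  case 0
  then show ?case
    using smooth_on_interval_mult[of a b f h] by (simp add: zero_of_mult_0)
next
  case (Suc m)
  obtain Df where Df: "hderivs a b f Df" using Suc.prems(1) unfolding zero_of_mult_def by blast
  obtain Dh where Dh: "hderivs a b h Dh" using Suc.prems(2) unfolding smooth_on_interval_def by blast
  obtain Dp where Dp: "hderivs a b (\<lambda>x. f x * h x) Dp"
    using smooth_on_interval_mult[OF smooth_on_intervalI[OF Df] Suc.prems(2)]
    unfolding smooth_on_interval_def by blast
  have "f z = 0" and f': "zero_of_mult a b (Df 1) z m"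
    using Suc.prems(1) zero_of_mult_Suc_iff[OF assms Df] by auto
  have "zero_of_mult a b (\<lambda>x. Df 1 x * h x + f x * Dh 1 x) z m"
  proof (rule zero_of_mult_add)
    show "zero_of_mult a b (\<lambda>x. Df 1 x * h x) z m" by (rule Suc.IH[OF f' Suc.prems(2)])
    show "zero_of_mult a b (\<lambda>x. f x * Dh 1 x) z m"
      using Suc.IH[OF zero_of_mult_mono[OF Suc.prems(1)] smooth_on_intervalI[OF hderivs_Suc[OF Dh]]]
      by simp
  qed
  then have "zero_of_mult a b (Dp 1) z m"
  proof (rule zero_of_mult_cong)
    fix x assume x: "x \<in> {a..b}"
    show "Df 1 x * h x + f x * Dh 1 x = Dp 1 x"
      using hderivs_one_eq[OF assms Dp x DERIV_mult[OF hderivs_has_real_derivative[OF Df x]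
          hderivs_has_real_derivative[OF Dh x]]]
      by (simp add: mult.commute)
  qed
  with \<open>f z = 0\<close> show ?case using zero_of_mult_Suc_iff[OF assms Dp] by simp
qed

lemma zero_of_mult_cancel_weight:
  fixes a b C :: real
  assumes "a < b" "zero_of_mult a b (\<lambda>x. C * w x * f x) z m"
    and "smooth_on_interval a b w" "\<forall>x\<in>{a..b}. 0 < w x" "C \<noteq> 0"
  shows "zero_of_mult a b f z m"
proof -
  have "smooth_on_interval a b (\<lambda>x. inverse (C * w x))"
    using smooth_on_interval_mult[OF smooth_on_interval_const[of a b "inverse C"]
        smooth_on_interval_inverse[OF assms(3,4)]]
    by (rule smooth_on_interval_cong) (simp add: inverse_mult_distrib)
  from zero_of_mult_mult[OF assms(1,2) this] show ?thesis
  proof (rule zero_of_mult_cong)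
    fix x assume "x \<in> {a..b}"
    then have "C * w x \<noteq> 0" using assms(4,5) by force
    then show "C * w x * f x * inverse (C * w x) = f x" by (simp add: field_simps)
  qed
qed

lemma zero_of_mult_poly_comp_le_order:
  fixes a b :: real
  assumes "a < b" and u: "hderivs a b u Du" and u': "\<forall>x\<in>{a..b}. 0 < Du 1 x"
  shows "p \<noteq> 0 \<Longrightarrow> zero_of_mult a b (\<lambda>x. poly p (u x)) z m \<Longrightarrow> m \<le> order (u z) p"
proof (induction m arbitrary: p)
  case 0
  then show ?case by simp
next
  case (Suc m)
  obtain Dw where Dw: "hderivs a b (\<lambda>x. poly p (u x)) Dw"
    using smooth_on_interval_poly_comp[OF smooth_on_intervalI[OF u]] unfolding smooth_on_interval_def by blast
  have root: "poly p (u z) = 0" and "zero_of_mult a b (Dw 1) z m"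
    using Suc.prems(2) zero_of_mult_Suc_iff[OF assms(1) Dw] by auto
  then have "zero_of_mult a b (\<lambda>x. Dw 1 x * inverse (Du 1 x)) z m"
    using zero_of_mult_mult[OF assms(1)] smooth_on_interval_inverse[OF smooth_on_intervalI[OF hderivs_Suc[OF u]]] u'
    by simp
  then have "zero_of_mult a b (\<lambda>x. poly (pderiv p) (u x)) z m"
  proof (rule zero_of_mult_cong)
    fix x assume x: "x \<in> {a..b}"
    have "Dw 1 x = poly (pderiv p) (u x) * Du 1 x"
      by (rule hderivs_one_eq[OF assms(1) Dw x])
        (rule DERIV_chain'[OF hderivs_has_real_derivative[OF u x] poly_DERIV])
    moreover have "Du 1 x \<noteq> 0" using u' x by force
    ultimately show "Dw 1 x * inverse (Du 1 x) = poly (pderiv p) (u x)"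
      by simp
  qed
  moreover have "pderiv p \<noteq> 0"
  proof
    assume "pderiv p = 0"
    then obtain c where "p = [:c:]" using pderiv_iszero by blast
    then show False using Suc.prems(1) root by simp
  qed
  ultimately have "m \<le> order (u z) (pderiv p)" by (rule Suc.IH[rotated])
  then show ?case using order_pderiv[OF Suc.prems(1) root] by simp
qed

lemma strict_mono_on_Icc_if_deriv_pos:
  fixes f :: "real \<Rightarrow> real"
  assumes "\<forall>x\<in>{a..b}. (f has_real_derivative f' x) (at x within {a..b})" "\<forall>x\<in>{a<..<b}. 0 < f' x"
  shows "strict_mono_on {a..b} f"
proof (rule strict_mono_onI)
  fix x y assume xy: "x \<in> {a..b}" "y \<in> {a..b}" "x < y"
  have "(f has_real_derivative f' t) (at t within {x..y})" if "x \<le> t" "t \<le> y" for t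
  proof (rule DERIV_subset)
    show "(f has_real_derivative f' t) (at t within {a..b})" using assms(1) xy that by auto
  qed (use xy in auto)
  then have "(f has_derivative (\<lambda>h. f' t * h)) (at t within {x..y})" if "x \<le> t" "t \<le> y" for t
    using that by (simp add: has_field_derivative_def)
  from mvt_simple[OF \<open>x < y\<close> this] obtain t where "t \<in> {x<..<y}" "f y - f x = f' t * (y - x)"
    by auto
  moreover have "0 < f' t" using assms(2) xy calculation(1) by auto
  ultimately have "0 < f y - f x" using \<open>x < y\<close> by simp
  then show "f x < f y" by simp
qed

lemma hderivs_pos_right_of_flat:
  fixes a b :: real
  assumes "a < b" "hderivs a b G DG" "\<forall>j\<le>r. DG j a = 0" "\<forall>x\<in>{a..b}. 0 < DG (Suc r) x"
    and "j \<le> Suc r" "x \<in> {a<..b}"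
  shows "0 < DG j x"
proof -
  have "\<forall>x\<in>{a<..b}. 0 < DG (Suc r - i) x" if "i \<le> Suc r" for i
    using that
  proof (induction i)
    case 0
    then show ?case using assms(4) by simp
  next
    case (Suc i)
    have i: "Suc (r - i) = Suc r - i" using Suc.prems by simp
    have "strict_mono_on {a..b} (DG (r - i))"
    proof (rule strict_mono_on_Icc_if_deriv_pos)
      show "\<forall>x\<in>{a..b}. (DG (r - i) has_real_derivative DG (Suc r - i) x) (at x within {a..b})"
        using assms(2) unfolding hderivs_def i[symmetric] by blast
      show "\<forall>x\<in>{a<..<b}. 0 < DG (Suc r - i) x"
        using Suc by auto
    qed
    moreover have "DG (r - i) a = 0" using assms(3) by simp
    ultimately show ?case
      using strict_mono_onD[of "{a..b}" "DG (r - i)" a] assms(1) by auto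
  qed
  from this[of "Suc r - j"] show ?thesis using assms(5,6) by simp
qed

lemma continuous_on_nonzero_sign_mult_pos:
  fixes f :: "real \<Rightarrow> real"
  assumes "continuous_on {a..b} f" "\<forall>x\<in>{a..b}. f x \<noteq> 0"
  shows "\<forall>x\<in>{a..b}. 0 < (if \<forall>x\<in>{a..b}. 0 < f x then 1 else -1) * f x"
proof -
  have "(\<forall>x\<in>{a..b}. 0 < f x) \<or> (\<forall>x\<in>{a..b}. f x < 0)"
  proof (rule ccontr)
    assume "\<not> ?thesis"
    then obtain x y where "x \<in> {a..b}" "y \<in> {a..b}" "f x \<le> 0" "0 \<le> f y"
      by (meson linorder_not_le)
    moreover have "connected (f ` {a..b})"
      using assms(1) by (rule connected_continuous_image) simp
    ultimately have "0 \<in> f ` {a..b}"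
      using connected_contains_Icc[of "f ` {a..b}" "f x" "f y"] by auto
    then show False using assms(2) by auto
  qed
  then show ?thesis by auto
qed

section \<open>Hadamard's lemma\<close>

lemma segment_param_in_Icc:
  fixes a b x t :: real
  assumes "x \<in> {a..b}" "t \<in> {0..1}"
  shows "a + t * (x - a) \<in> {a..b}"
  using assms mult_left_le_one_le[of "x - a" t] by (auto simp: mult_nonneg_nonneg)

lemma DERIV_chain_within_image:
  assumes "(f has_real_derivative d) (at (g x) within T)" "g ` S \<subseteq> T"
    and "(g has_real_derivative e) (at x within S)"
  shows "((\<lambda>x. f (g x)) has_real_derivative d * e) (at x within S)"
  using DERIV_image_chain[OF DERIV_subset[OF assms(1,2)] assms(3)] by (simp add: o_def)

definition hadamard_quot :: "real \<Rightarrow> (real \<Rightarrow> real) \<Rightarrow> nat \<Rightarrow> real \<Rightarrow> real" where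
  "hadamard_quot a \<phi> m x = integral {0..1} (\<lambda>t. t ^ m * \<phi> (a + t * (x - a)))"

lemma has_real_derivative_hadamard_quot:
  fixes a b :: real
  assumes "hderivs a b \<phi> D" "x0 \<in> {a..b}"
  shows "(hadamard_quot a (D j) j has_real_derivative hadamard_quot a (D (Suc j)) (Suc j) x0)
           (at x0 within {a..b})"
proof -
  let ?f = "\<lambda>x t. t ^ j * D j (a + t * (x - a))"
  let ?fx = "\<lambda>x t. t ^ Suc j * D (Suc j) (a + t * (x - a))"
  have cont: "continuous_on {a..b} (D i)" for i by (rule continuous_on_hderivs[OF assms(1)])
  have "((\<lambda>x. integral (cbox 0 1) (?f x)) has_real_derivative integral (cbox 0 1) (?fx x0))
      (at x0 within {a..b})"
  proof (rule leibniz_rule_field_derivative)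
    fix x t assume x: "x \<in> {a..b}" and "t \<in> cbox (0::real) 1"
    then have t: "t \<in> {0..1}" by simp
    have "(D j has_real_derivative D (Suc j) (a + t * (x - a))) (at (a + t * (x - a)) within {a..b})"
      using assms(1) segment_param_in_Icc[OF x t] by (simp add: hderivs_def)
    moreover have "(\<lambda>x. a + t * (x - a)) ` {a..b} \<subseteq> {a..b}" using segment_param_in_Icc t by auto
    moreover have "((\<lambda>x. a + t * (x - a)) has_real_derivative t) (at x within {a..b})"
      by (auto intro!: derivative_eq_intros)
    ultimately have "((\<lambda>x. D j (a + t * (x - a))) has_real_derivative D (Suc j) (a + t * (x - a)) * t)
        (at x within {a..b})"
      by (rule DERIV_chain_within_image)
    then show "((\<lambda>x. ?f x t) has_real_derivative ?fx x t) (at x within {a..b})"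
      by (auto intro!: derivative_eq_intros simp: algebra_simps)
  next
    fix x assume x: "x \<in> {a..b}"
    have "continuous_on {0..1} (\<lambda>t. D j (a + t * (x - a)))"
      by (rule continuous_on_compose2[OF cont]) (use segment_param_in_Icc[OF x] in \<open>auto intro!: continuous_intros\<close>)
    then have "continuous_on {0..1} (?f x)" by (intro continuous_intros)
    then show "?f x integrable_on cbox 0 1"
      by (simp add: integrable_continuous_interval)
  next
    have "continuous_on ({a..b} \<times> cbox 0 1) (\<lambda>p. D (Suc j) (a + snd p * (fst p - a)))"
      by (rule continuous_on_compose2[OF cont])
        (use segment_param_in_Icc in \<open>auto intro!: continuous_intros\<close>)
    then show "continuous_on ({a..b} \<times> cbox 0 1) (\<lambda>(x, t). ?fx x t)"
      by (auto intro!: continuous_intros simp: split_beta)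
  qed (use assms(2) in auto)
  then show ?thesis unfolding hadamard_quot_def by simp
qed

lemma hderivs_hadamard_quot:
  fixes a b :: real
  assumes "hderivs a b \<phi> D"
  shows "hderivs a b (hadamard_quot a (D 0) 0) (\<lambda>j. hadamard_quot a (D j) j)"
  unfolding hderivs_def using has_real_derivative_hadamard_quot[OF assms] by auto

lemma hadamard_quot_at_base: "hadamard_quot a \<phi> m a = \<phi> a / (real m + 1)"
proof -
  let ?c = "\<phi> a / (real m + 1)"
  have "((\<lambda>t. t ^ m * \<phi> a) has_integral (1 ^ Suc m * ?c - 0 ^ Suc m * ?c)) {0..1}"
  proof (rule fundamental_theorem_of_calculus)
    fix t :: real
    have "((\<lambda>t. t ^ Suc m * ?c) has_real_derivative real (Suc m) * t ^ (Suc m - Suc 0) * ?c)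
        (at t within {0..1})"
      by (rule DERIV_cmult_right[OF DERIV_pow])
    moreover have "real (Suc m) * t ^ (Suc m - Suc 0) * ?c = t ^ m * \<phi> a" by (simp add: field_simps)
    ultimately have "((\<lambda>t. t ^ Suc m * ?c) has_real_derivative t ^ m * \<phi> a) (at t within {0..1})"
      by (simp only:)
    then show "((\<lambda>t. t ^ Suc m * ?c) has_vector_derivative t ^ m * \<phi> a) (at t within {0..1})"
      by (simp only: has_real_derivative_iff_has_vector_derivative)
  qed simp
  then have "((\<lambda>t. t ^ m * \<phi> a) has_integral ?c) {0..1}" by simp
  then have "integral {0..1} (\<lambda>t. t ^ m * \<phi> a) = ?c" by (rule integral_unique)
  then show ?thesis unfolding hadamard_quot_def by simp
qed

lemma hadamard_quot_factor:
  fixes a b :: real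
  assumes "hderivs a b \<phi> D" "x \<in> {a..b}"
  shows "\<phi> x = \<phi> a + (x - a) * hadamard_quot a (D 1) 0 x"
proof -
  have "((\<lambda>t. D 1 (a + t * (x - a)) * (x - a)) has_integral (D 0 (a + 1 * (x - a)) - D 0 (a + 0 * (x - a)))) {0..1}"
  proof (rule fundamental_theorem_of_calculus)
    fix t :: real assume t: "t \<in> {0..1}"
    have "(D 0 has_real_derivative D 1 (a + t * (x - a))) (at (a + t * (x - a)) within {a..b})"
      using assms segment_param_in_Icc[OF assms(2) t] by (simp add: hderivs_def)
    moreover have "(\<lambda>t. a + t * (x - a)) ` {0..1} \<subseteq> {a..b}" using segment_param_in_Icc[OF assms(2)] by auto
    ultimately have "((\<lambda>t. D 0 (a + t * (x - a))) has_real_derivative D 1 (a + t * (x - a)) * (x - a))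
        (at t within {0..1})"
      by (rule DERIV_chain_within_image) (auto intro!: derivative_eq_intros)
    then show "((\<lambda>t. D 0 (a + t * (x - a))) has_vector_derivative D 1 (a + t * (x - a)) * (x - a))
        (at t within {0..1})"
      by (simp add: has_real_derivative_iff_has_vector_derivative)
  qed simp
  moreover have "a \<in> {a..b}" using assms(2) by simp
  ultimately show ?thesis
    using assms unfolding hadamard_quot_def by (auto simp: hderivs_def mult.commute dest!: integral_unique)
qed

lemma hadamard_factor:
  fixes a b :: real
  assumes "a < b" "hderivs a b G DG"
  shows "(\<forall>j<i. DG j a = 0) \<Longrightarrow> \<exists>H DH. hderivs a b H DH \<and> (\<forall>x\<in>{a..b}. G x = (x - a) ^ i * H x) \<and>
           (\<forall>j. DH j a = DG (j + i) a * fact j / fact (j + i))"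
proof (induction i)
  case 0
  show ?case using assms(2) by (intro exI[of _ G] exI[of _ DG]) auto
next
  case (Suc i)
  then obtain H DH where H: "hderivs a b H DH" "\<forall>x\<in>{a..b}. G x = (x - a) ^ i * H x"
    and DH: "\<forall>j. DH j a = DG (j + i) a * fact j / fact (j + i)"
    by auto
  have "a \<in> {a..b}" using assms(1) by simp
  moreover have "DH 0 a = 0" using DH Suc.prems by simp
  ultimately have "H a = 0" using H(1) by (simp add: hderivs_def)
  let ?H = "hadamard_quot a (DH 1) 0" and ?DH = "\<lambda>j. hadamard_quot a (DH (Suc j)) j"
  have "hderivs a b ?H ?DH"
    using hderivs_hadamard_quot[OF hderivs_Suc[OF H(1)]] by simp
  moreover have "\<forall>x\<in>{a..b}. G x = (x - a) ^ Suc i * ?H x"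
    using H hadamard_quot_factor[OF H(1)] \<open>H a = 0\<close> by simp
  moreover have "?DH j a = DG (j + Suc i) a * fact j / fact (j + Suc i)" for j
  proof -
    have "?DH j a = DH (Suc j) a / (real j + 1)" by (simp add: hadamard_quot_at_base)
    also have "\<dots> = DG (j + Suc i) a * (fact (Suc j) / (real j + 1)) / fact (j + Suc i)"
      using DH by simp
    also have "fact (Suc j) / (real j + 1) = fact j" by (simp add: add.commute)
    finally show ?thesis by simp
  qed
  ultimately show ?case by blast
qed

lemma hadamard_factor_pos:
  fixes a b :: real
  assumes "a < b" "hderivs a b G DG" "\<forall>j\<le>r. DG j a = 0" "\<forall>x\<in>{a..b}. 0 < DG (Suc r) x"
  obtains H where "smooth_on_interval a b H" "\<forall>x\<in>{a..b}. G x = (x - a) ^ Suc r * H x"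
    "\<forall>x\<in>{a..b}. 0 < H x"
proof -
  obtain H DH where H: "hderivs a b H DH" "\<forall>x\<in>{a..b}. G x = (x - a) ^ Suc r * H x"
    and DH: "\<forall>j. DH j a = DG (j + Suc r) a * fact j / fact (j + Suc r)"
    using hadamard_factor[OF assms(1,2), of "Suc r"] assms(3) by (auto simp: less_Suc_eq_le)
  have "0 < H x" if x: "x \<in> {a..b}" for x
  proof (cases "x = a")
    case True
    then show ?thesis using H(1) DH[rule_format, of 0] assms(4) x by (simp add: hderivs_def)
  next
    case False
    then have "0 < G x" "0 < (x - a) ^ Suc r"
      using hderivs_pos_right_of_flat[OF assms, of 0 x] assms(2) x by (auto simp: hderivs_def)
    then show ?thesis using H(2) x zero_less_mult_pos by metis
  qed
  then show ?thesis using that H smooth_on_intervalI by blast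
qed

section \<open>The root substitution\<close>

lemma powr_root_power:
  fixes y :: real
  assumes "0 < y"
  shows "(y powr (1 / (real r + 1))) ^ Suc r = y"
proof -
  have "(y powr (1 / (real r + 1))) ^ Suc r = y powr (real (Suc r) * (1 / (real r + 1)))"
    using assms by (intro powr_power) simp
  also have "real (Suc r) * (1 / (real r + 1)) = 1" by simp
  finally show ?thesis using assms by simp
qed

lemma power_mult_power_Suc_powr:
  fixes y :: real
  assumes "0 < y"
  shows "y ^ r * (y ^ Suc r) powr ((real k - real r) / (real r + 1)) = y ^ k"
proof -
  have "y ^ Suc r = y powr real (Suc r)" "y ^ r = y powr real r"
    by (rule powr_realpow[OF assms, symmetric])+
  moreover have "real (Suc r) * ((real k - real r) / (real r + 1)) = real k - real r"
    by (simp add: field_simps)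
  ultimately have "y ^ r * (y ^ Suc r) powr ((real k - real r) / (real r + 1))
      = y powr real r * y powr (real k - real r)"
    by (simp only: powr_powr)
  also have "\<dots> = y powr (real r + (real k - real r))" by (simp only: powr_add)
  also have "\<dots> = y ^ k" using assms by (simp add: powr_realpow)
  finally show ?thesis .
qed

lemma smooth_root_of_flat:
  fixes a b :: real
  assumes "a < b" "hderivs a b G DG" "\<forall>j\<le>r. DG j a = 0" "\<forall>x\<in>{a..b}. 0 < DG (Suc r) x"
  obtains u Du where "hderivs a b u Du" "\<forall>x\<in>{a..b}. u x ^ Suc r = G x"
    "\<forall>x\<in>{a<..b}. 0 < u x" "\<forall>x\<in>{a..b}. 0 < Du 1 x"
proof -
  obtain H where H: "smooth_on_interval a b H" "\<forall>x\<in>{a..b}. G x = (x - a) ^ Suc r * H x"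
    "\<forall>x\<in>{a..b}. 0 < H x"
    using hadamard_factor_pos[OF assms] by blast
  define V where "V x = H x powr (1 / (real r + 1))" for x
  obtain DV where DV: "hderivs a b V DV"
    using smooth_on_interval_powr[OF H(1,3)] unfolding V_def[abs_def] smooth_on_interval_def by blast
  have Vpos: "0 < V x" if "x \<in> {a..b}" for x
  proof -
    have "H x \<noteq> 0" using H(3) that by force
    then show ?thesis by (simp add: V_def)
  qed
  define u where "u x = (x - a) * V x" for x
  obtain Du where Du: "hderivs a b u Du"
    using smooth_on_interval_mult[OF smooth_on_interval_diff_const smooth_on_intervalI[OF DV]]
    unfolding u_def[abs_def] smooth_on_interval_def by blast
  have root: "\<forall>x\<in>{a..b}. u x ^ Suc r = G x"
  proof
    fix x assume x: "x \<in> {a..b}"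
    have "V x ^ Suc r = H x" unfolding V_def by (rule powr_root_power) (use H(3) x in auto)
    then show "u x ^ Suc r = G x" using H(2) x by (simp add: u_def power_mult_distrib)
  qed
  have upos: "\<forall>x\<in>{a<..b}. 0 < u x" using Vpos by (simp add: u_def)
  have "0 < Du 1 x" if x: "x \<in> {a..b}" for x
  proof (cases "x = a")
    case True
    have "((\<lambda>x. x - a) has_real_derivative 1) (at x within {a..b})"
      by (auto intro!: derivative_eq_intros)
    from DERIV_mult[OF this hderivs_has_real_derivative[OF DV x]]
    have "Du 1 x = 1 * V x + DV 1 x * (x - a)"
      by (intro hderivs_one_eq[OF assms(1) Du x]) (simp add: u_def[abs_def])
    then show ?thesis using True Vpos x by simp
  next
    case False
    have "DG 1 x = (1 + real r) * (Du 1 x * u x ^ r)"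
      using hderivs_one_eq[OF assms(1,2) x] DERIV_power_Suc[OF hderivs_has_real_derivative[OF Du x]]
        has_field_derivative_transform_within[OF _ zero_less_one x, of "\<lambda>x. u x ^ Suc r" _ G] root
      by simp
    moreover have "0 < DG 1 x" "0 < u x"
      using hderivs_pos_right_of_flat[OF assms, of 1 x] upos False x by auto
    ultimately show ?thesis by (simp add: zero_less_mult_iff)
  qed
  then show ?thesis using that Du root upos by blast
qed

lemma Lim_at_right_extension_eq:
  fixes a b :: real and F \<psi> :: "real \<Rightarrow> real"
  assumes "a < b" "continuous_on {a..b} \<psi>" "\<forall>x\<in>{a<..b}. F x = \<psi> x" "x \<in> {a..b}"
  shows "(if x = a then Lim (at_right a) F else F x) = \<psi> x"
proof (cases "x = a")
  case True
  have "(\<psi> \<longlongrightarrow> \<psi> a) (at_right a)"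
    using assms(1,2) by (simp add: continuous_on_Icc_at_rightD)
  moreover have "eventually (\<lambda>x. \<psi> x = F x) (at_right a)"
    using eventually_at_right_real[OF assms(1)] by eventually_elim (use assms(3) in auto)
  ultimately have "(F \<longlongrightarrow> \<psi> a) (at_right a)" by (rule Lim_transform_eventually)
  then show ?thesis using True by (simp add: tendsto_Lim)
qed (use assms(3,4) in auto)

lemma phi_hat_eq_root_power:
  fixes a b :: real and D :: "nat \<Rightarrow> real \<Rightarrow> real" and r :: nat
  defines "s \<equiv> if \<forall>x\<in>{a..b}. 0 < D (Suc r) x then 1 else -1 :: real"
  assumes ab: "a < b" and g: "hderivs a b g D" and u: "hderivs a b u Du"
    and root: "\<forall>x\<in>{a..b}. u x ^ Suc r = s * g x" and upos: "\<forall>x\<in>{a<..b}. 0 < u x"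
    and x: "x \<in> {a..b}"
  shows "phi_hat a b g D r k x = s * (real r + 1) * Du 1 x * u x ^ k"
proof -
  define e where "e = (real k - real r) / (real r + 1)"
  define F where "F x = D 1 x * (s * g x) powr e" for x
  have D1: "D 1 x = s * (real r + 1) * u x ^ r * Du 1 x" if x: "x \<in> {a..b}" for x
  proof -
    have "((\<lambda>x. u x ^ Suc r) has_real_derivative (1 + real r) * (Du 1 x * u x ^ r)) (at x within {a..b})"
      by (rule DERIV_power_Suc[OF hderivs_has_real_derivative[OF u x]])
    then have "((\<lambda>x. s * g x) has_real_derivative (1 + real r) * (Du 1 x * u x ^ r)) (at x within {a..b})"
      by (rule has_field_derivative_transform_within[OF _ zero_less_one x]) (use root in blast)
    then have "s * D 1 x = (1 + real r) * (Du 1 x * u x ^ r)"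
      by (rule hderivs_one_eq[OF ab hderivs_cmult[OF g] x])
    moreover have "s * s = 1" by (simp add: s_def)
    ultimately have "D 1 x = s * ((1 + real r) * (Du 1 x * u x ^ r))"
      by (metis mult.assoc mult_1)
    then show ?thesis by (simp add: algebra_simps)
  qed
  have "F x = s * (real r + 1) * Du 1 x * u x ^ k" if x: "x \<in> {a<..b}" for x
  proof -
    have xI: "x \<in> {a..b}" using x by simp
    have "s * g x = u x ^ Suc r" using root xI by simp
    then have "F x = s * (real r + 1) * u x ^ r * Du 1 x * (u x ^ Suc r) powr e"
      by (simp only: F_def D1[OF xI])
    also have "\<dots> = s * (real r + 1) * Du 1 x * (u x ^ r * (u x ^ Suc r) powr e)"
      by (simp only: mult_ac)
    also have "u x ^ r * (u x ^ Suc r) powr e = u x ^ k"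
      unfolding e_def by (rule power_mult_power_Suc_powr) (use upos x in simp)
    finally show ?thesis .
  qed
  moreover have "continuous_on {a..b} (\<lambda>x. s * (real r + 1) * Du 1 x * u x ^ k)"
    using continuous_on_hderivs[OF u] continuous_on_hderivs_fun[OF u]
    by (intro continuous_intros) auto
  ultimately have "(if x = a then Lim (at_right a) F else F x) = s * (real r + 1) * Du 1 x * u x ^ k"
    by (intro Lim_at_right_extension_eq[OF ab _ _ x]) auto
  moreover have "phi_hat a b g D r k x = (if x = a then Lim (at_right a) F else F x)"
    unfolding phi_hat_def Let_def F_def e_def s_def by simp
  ultimately show ?thesis by simp
qed

section \<open>Extended Chebyshev spaces of weighted powers\<close>

lemma poly_eq_0_if_comp_vanishes:
  fixes p :: "'a::idom poly"
  assumes "inj_on u S" "infinite S" "\<forall>x\<in>S. poly p (u x) = 0"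
  shows "p = 0"
proof (rule ccontr)
  assume "p \<noteq> 0"
  then have "finite {y. poly p y = 0}" by (rule poly_roots_finite)
  then have "finite (u ` S)" by (rule finite_subset[rotated]) (use assms(3) in auto)
  then show False using assms(1,2) finite_imageD by blast
qed

lemma sum_zero_mult_poly_comp_le_degree:
  fixes a b :: real
  assumes "a < b" "hderivs a b u Du" "\<forall>x\<in>{a..b}. 0 < Du 1 x" "p \<noteq> 0" "finite Z"
    and zeros: "\<forall>z\<in>Z. zero_of_mult a b (\<lambda>x. poly p (u x)) z (m z)"
  shows "sum m Z \<le> degree p"
proof -
  let ?R = "{y. poly p y = 0}"
  have Z: "Z \<subseteq> {a..b}" using zeros unfolding zero_of_mult_def by blast
  have "strict_mono_on {a..b} u"
    using assms(2,3) by (intro strict_mono_on_Icc_if_deriv_pos) (auto intro: hderivs_has_real_derivative)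
  then have inj: "inj_on u Z" using Z strict_mono_on_imp_inj_on inj_on_subset by blast
  have "sum m Z \<le> (\<Sum>z\<in>Z. order (u z) p)"
    using zeros zero_of_mult_poly_comp_le_order[OF assms(1-4)] by (intro sum_mono) blast
  also have "\<dots> = (\<Sum>y\<in>u ` Z. order y p)" by (simp add: sum.reindex[OF inj])
  also have "\<dots> = (\<Sum>y\<in>u ` Z \<inter> ?R. order y p)"
    using assms(4) by (intro sum.mono_neutral_right) (auto simp: assms(5) order_root)
  also have "\<dots> \<le> (\<Sum>y\<in>?R. order y p)"
    using poly_roots_finite[OF assms(4)] by (intro sum_mono2) auto
  also have "\<dots> \<le> degree p" by (rule sum_order_le_degree[OF assms(4)])
  finally show ?thesis .
qed

lemma degree_sum_monom_le: "degree (\<Sum>k<n. monom (c k) k) \<le> n - 1"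
proof (rule degree_sum_le)
  fix k assume "k \<in> {..<n}"
  then show "degree (monom (c k) k) \<le> n - 1" using degree_monom_le[of "c k" k] by auto
qed simp

lemma ext_chebyshev_span_weighted_powers:
  fixes a b C :: real
  assumes ab: "a < b" and u: "hderivs a b u Du" "\<forall>x\<in>{a..b}. 0 < Du 1 x"
    and w: "smooth_on_interval a b w" "\<forall>x\<in>{a..b}. 0 < w x" and "C \<noteq> 0"
    and phi: "\<forall>k<n. \<forall>x\<in>{a..b}. phi k x = C * w x * u x ^ k"
  shows "ext_chebyshev_span a b n phi"
proof -
  define p where "p c = (\<Sum>k<n. monom (c k) k)" for c :: "nat \<Rightarrow> real"
  have span: "(\<Sum>k<n. c k * phi k x) = C * w x * poly (p c) (u x)" if "x \<in> {a..b}" for c x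
    using phi that by (simp add: p_def poly_sum poly_monom sum_distrib_left mult_ac)
  show ?thesis
    unfolding ext_chebyshev_span_def
  proof (intro conjI allI impI)
    fix k assume "k < n"
    have "smooth_on_interval a b (\<lambda>x. C * w x * u x ^ k)"
      by (intro smooth_on_interval_mult smooth_on_interval_const w(1) smooth_on_interval_power
          smooth_on_intervalI[OF u(1)])
    then show "smooth_on_interval a b (phi k)"
      by (rule smooth_on_interval_cong) (use phi \<open>k < n\<close> in simp)
  next
    fix c k assume vanish: "\<forall>x\<in>{a..b}. (\<Sum>k<n. c k * phi k x) = 0" and "k < n"
    have "strict_mono_on {a..b} u"
      using u by (intro strict_mono_on_Icc_if_deriv_pos) (auto intro: hderivs_has_real_derivative)
    moreover have "poly (p c) (u x) = 0" if "x \<in> {a..b}" for x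
      using vanish span[of x c] w(2) \<open>C \<noteq> 0\<close> that by force
    ultimately have "p c = 0"
      by (intro poly_eq_0_if_comp_vanishes[OF strict_mono_on_imp_inj_on infinite_Icc[OF ab]]) auto
    then have "coeff (p c) k = 0" by simp
    then show "c k = 0" using \<open>k < n\<close> by (simp add: p_def coeff_sum)
  next
    fix c Z m
    assume "(\<exists>x\<in>{a..b}. (\<Sum>k<n. c k * phi k x) \<noteq> 0) \<and> finite Z \<and> Z \<subseteq> {a..b} \<and>
      (\<forall>z\<in>Z. zero_of_mult a b (\<lambda>x. \<Sum>k<n. c k * phi k x) z (m z))"
    then have nonzero: "\<exists>x\<in>{a..b}. (\<Sum>k<n. c k * phi k x) \<noteq> 0" and "finite Z"
      and zeros: "\<forall>z\<in>Z. zero_of_mult a b (\<lambda>x. \<Sum>k<n. c k * phi k x) z (m z)"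
      by auto
    have "p c \<noteq> 0" using nonzero span by force
    moreover have "\<forall>z\<in>Z. zero_of_mult a b (\<lambda>x. poly (p c) (u x)) z (m z)"
    proof
      fix z assume "z \<in> Z"
      with zeros have "zero_of_mult a b (\<lambda>x. \<Sum>k<n. c k * phi k x) z (m z)" by blast
      then have "zero_of_mult a b (\<lambda>x. C * w x * poly (p c) (u x)) z (m z)"
        by (rule zero_of_mult_cong) (rule span)
      then show "zero_of_mult a b (\<lambda>x. poly (p c) (u x)) z (m z)"
        by (rule zero_of_mult_cancel_weight[OF ab _ w \<open>C \<noteq> 0\<close>])
    qed
    ultimately have "sum m Z \<le> degree (p c)"
      by (rule sum_zero_mult_poly_comp_le_degree[OF ab u _ \<open>finite Z\<close>])
    then show "sum m Z \<le> n - 1" using degree_sum_monom_le[of c n] by (simp add: p_def)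
  qed
qed

theorem lemma3p6:
  fixes a b :: real and g :: "real \<Rightarrow> real" and D :: "nat \<Rightarrow> real \<Rightarrow> real" and r n :: nat
  assumes "a < b"
    and "r \<ge> 1"
    and "hderivs a b g D"
    and "g a = 0"
    and "\<forall>j\<in>{1..r}. D j a = 0"
    and "\<forall>x\<in>{a..b}. D (Suc r) x \<noteq> 0"
    and "n \<ge> 1"
  shows "ext_chebyshev_span a b n (phi_hat a b g D r)"
proof -
  define s where "s = (if \<forall>x\<in>{a..b}. 0 < D (Suc r) x then 1 else -1 :: real)"
  have "\<forall>x\<in>{a..b}. 0 < s * D (Suc r) x"
    unfolding s_def by (rule continuous_on_nonzero_sign_mult_pos[OF continuous_on_hderivs[OF assms(3)] assms(6)])
  moreover have "\<forall>j\<le>r. s * D j a = 0"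
  proof (intro allI impI)
    fix j assume "j \<le> r"
    then have "D j a = 0"
      using assms(1,3-5) by (cases j) (auto simp: hderivs_def)
    then show "s * D j a = 0" by simp
  qed
  ultimately obtain u Du where u: "hderivs a b u Du" "\<forall>x\<in>{a..b}. u x ^ Suc r = s * g x"
    "\<forall>x\<in>{a<..b}. 0 < u x" "\<forall>x\<in>{a..b}. 0 < Du 1 x"
    using smooth_root_of_flat[OF assms(1) hderivs_cmult[OF assms(3)]] by blast
  have "\<forall>k<n. \<forall>x\<in>{a..b}. phi_hat a b g D r k x = s * (real r + 1) * Du 1 x * u x ^ k"
    using phi_hat_eq_root_power[OF assms(1,3) u(1)] u(2,3) unfolding s_def by blast
  moreover have "s * (real r + 1) \<noteq> 0" by (simp add: s_def)
  ultimately show ?thesis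
    using ext_chebyshev_span_weighted_powers[OF assms(1) u(1,4) smooth_on_intervalI[OF hderivs_Suc[OF u(1)]] u(4)]
    by blast
qed

end
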